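(* Let $\gamma\to_d\gamma'$ be a smooth d-step. Then: (i) for every $e\in\mathrm{Edges}$, $e$ is non-smooth in $\gamma$ iff $e$ is non-smooth in $\gamma'$; (ii) for every $e\in\mathrm{Edges}$ non-smooth in $\gamma$, $\mathrm{rank}_\gamma(e)=\mathrm{rank}_{\gamma'}(e)$; (iii) $\mathrm{sum}_d\gamma'>\mathrm{sum}_d\gamma$.
   Context: Let $G$ be a finite, connected, undirected graph with node set $V$ and a distinguished node $r$ (the root); $\mathrm{Edges}=\{(p,q)\in V\times V : p,q\text{ adjacent}\}$ (both orientations). Each node $p$ has a fixed ordered list $N(p)$ of its neighbours. A configuration $\gamma$ assigns to each node $p$ a value $\gamma.p.d\in\mathbb N$ and a neighbour $\gamma.p.par\in N(p)$. For a non-root $p$ let $Dist_p(\gamma)=\min\{\gamma.q.d+1 : q\in N(p)\}$. Algorithm BFS: Root enabled iff $\gamma.r.d\neq 0$, executing sets $r.d:=0$. Non-root $p$, action CD: enabled iff $\gamma.p.d\ne Dist_p(\gamma)$, executing sets $p.d:=Dist_p(\gamma)$. Non-root $p$, action CP: enabled iff $\gamma.p.d=Dist_p(\gamma)$ and $\gamma.q_0.d+1\neq\gamma.p.d$ with $q_0=\gamma.p.par$; executing sets $p.par$ to the first $q\in N(p)$ with $\gamma.q.d+1=\gamma.p.d$. A step $\gamma\to\gamma'$ holds iff a nonempty set $S$ of enabled nodes simultaneously execute their enabled action (evaluated in $\gamma$), others unchanged. A d-step $\gamma\to_d\gamma'$ is a step with $\gamma.r.d=\gamma'.r.d$ and $\gamma.p.d\neq\gamma'.p.d$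 for some $p$. An edge $(p,q)$ is smooth in $\gamma$ if $|\gamma.p.d-\gamma.q.d|\le 1$, non-smooth otherwise. A d-step $\gamma\to_d\gamma'$ is smooth if every node $p$ with $\gamma'.p.d\neq\gamma.p.d$ has all its edges $(p,q)$, $q\in N(p)$, smooth in $\gamma$; otherwise it is non-smooth. $\mathrm{rank}_\gamma(p,q)=\min(\gamma.p.d,\gamma.q.d)$. $\mathrm{sum}_d\gamma=\sum_{q\in V}\gamma.q.d$. *)

theory Defs
  imports Main
begin

definition Edges :: "'v set \<Rightarrow> ('v \<Rightarrow> 'v list) \<Rightarrow> ('v \<times> 'v) set" where
  "Edges V Nb = {(p, q). p \<in> V \<and> q \<in> set (Nb p)}"

definition rooted_graph :: "'v set \<Rightarrow> ('v \<Rightarrow> 'v list) \<Rightarrow> 'v \<Rightarrow> bool" where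
  "rooted_graph V Nb r \<longleftrightarrow>
     finite V \<and> r \<in> V \<and>
     (\<forall>p\<in>V. set (Nb p) \<subseteq> V \<and> distinct (Nb p) \<and> p \<notin> set (Nb p)) \<and>
     (\<forall>p\<in>V. \<forall>q\<in>V. q \<in> set (Nb p) \<longleftrightarrow> p \<in> set (Nb q)) \<and>
     (\<forall>p\<in>V. (r, p) \<in> (Edges V Nb)\<^sup>*)"

record 'v conf =
  dd :: "'v \<Rightarrow> nat"
  par :: "'v \<Rightarrow> 'v"

definition valid_conf :: "'v set \<Rightarrow> ('v \<Rightarrow> 'v list) \<Rightarrow> 'v conf \<Rightarrow> bool" where
  "valid_conf V Nb \<gamma> \<longleftrightarrow> (\<forall>p\<in>V. par \<gamma> p \<in> set (Nb p))"

definition Dist :: "('v \<Rightarrow> 'v list) \<Rightarrow> 'v conf \<Rightarrow> 'v \<Rightarrow> nat" where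
  "Dist Nb \<gamma> p = Min {dd \<gamma> q + 1 | q. q \<in> set (Nb p)}"

definition en_root :: "'v conf \<Rightarrow> 'v \<Rightarrow> bool" where
  "en_root \<gamma> r \<longleftrightarrow> dd \<gamma> r \<noteq> 0"

definition en_CD :: "('v \<Rightarrow> 'v list) \<Rightarrow> 'v conf \<Rightarrow> 'v \<Rightarrow> bool" where
  "en_CD Nb \<gamma> p \<longleftrightarrow> dd \<gamma> p \<noteq> Dist Nb \<gamma> p"

definition en_CP :: "('v \<Rightarrow> 'v list) \<Rightarrow> 'v conf \<Rightarrow> 'v \<Rightarrow> bool" where
  "en_CP Nb \<gamma> p \<longleftrightarrow> dd \<gamma> p = Dist Nb \<gamma> p \<and> dd \<gamma> (par \<gamma> p) + 1 \<noteq> dd \<gamma> p"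

definition enabled :: "('v \<Rightarrow> 'v list) \<Rightarrow> 'v \<Rightarrow> 'v conf \<Rightarrow> 'v \<Rightarrow> bool" where
  "enabled Nb r \<gamma> p \<longleftrightarrow> (if p = r then en_root \<gamma> r else en_CD Nb \<gamma> p \<or> en_CP Nb \<gamma> p)"

definition exec_d :: "('v \<Rightarrow> 'v list) \<Rightarrow> 'v \<Rightarrow> 'v conf \<Rightarrow> 'v \<Rightarrow> nat" where
  "exec_d Nb r \<gamma> p =
     (if p = r then 0 else if en_CD Nb \<gamma> p then Dist Nb \<gamma> p else dd \<gamma> p)"

definition exec_par :: "('v \<Rightarrow> 'v list) \<Rightarrow> 'v \<Rightarrow> 'v conf \<Rightarrow> 'v \<Rightarrow> 'v" where
  "exec_par Nb r \<gamma> p =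
     (if p \<noteq> r \<and> en_CP Nb \<gamma> p
      then the (find (\<lambda>q. dd \<gamma> q + 1 = dd \<gamma> p) (Nb p))
      else par \<gamma> p)"

definition step :: "'v set \<Rightarrow> ('v \<Rightarrow> 'v list) \<Rightarrow> 'v \<Rightarrow> 'v conf \<Rightarrow> 'v conf \<Rightarrow> bool" where
  "step V Nb r \<gamma> \<gamma>' \<longleftrightarrow>
     (\<exists>S. S \<subseteq> V \<and> S \<noteq> {} \<and> (\<forall>p\<in>S. enabled Nb r \<gamma> p) \<and>
        (\<forall>p. dd \<gamma>' p = (if p \<in> S then exec_d Nb r \<gamma> p else dd \<gamma> p)) \<and>
        (\<forall>p. par \<gamma>' p = (if p \<in> S then exec_par Nb r \<gamma> p else par \<gamma> p)))"

definition d_step :: "'v set \<Rightarrow> ('v \<Rightarrow> 'v list) \<Rightarrow> 'v \<Rightarrow> 'v conf \<Rightarrow> 'v conf \<Rightarrow> bool" where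
  "d_step V Nb r \<gamma> \<gamma>' \<longleftrightarrow>
     step V Nb r \<gamma> \<gamma>' \<and> dd \<gamma> r = dd \<gamma>' r \<and> (\<exists>p\<in>V. dd \<gamma> p \<noteq> dd \<gamma>' p)"

definition smooth_edge :: "'v conf \<Rightarrow> 'v \<times> 'v \<Rightarrow> bool" where
  "smooth_edge \<gamma> e \<longleftrightarrow>
     (case e of (p, q) \<Rightarrow> \<bar>int (dd \<gamma> p) - int (dd \<gamma> q)\<bar> \<le> 1)"

definition smooth_d_step :: "'v set \<Rightarrow> ('v \<Rightarrow> 'v list) \<Rightarrow> 'v \<Rightarrow> 'v conf \<Rightarrow> 'v conf \<Rightarrow> bool" where
  "smooth_d_step V Nb r \<gamma> \<gamma>' \<longleftrightarrow>
     d_step V Nb r \<gamma> \<gamma>' \<and>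
     (\<forall>p\<in>V. dd \<gamma>' p \<noteq> dd \<gamma> p \<longrightarrow> (\<forall>q\<in>set (Nb p). smooth_edge \<gamma> (p, q)))"

definition rank :: "'v conf \<Rightarrow> 'v \<times> 'v \<Rightarrow> nat" where
  "rank \<gamma> e = (case e of (p, q) \<Rightarrow> min (dd \<gamma> p) (dd \<gamma> q))"

definition sum_d :: "'v set \<Rightarrow> 'v conf \<Rightarrow> nat" where
  "sum_d V \<gamma> = (\<Sum>q\<in>V. dd \<gamma> q)"

end

theory Submission
  imports Defs
begin

text \<open>A node that moves in a smooth d-step is a non-root node executing CD, and its old value
  differs by at most one from those of all its neighbours. Hence its new value
  \<open>Dist = min (d q + 1)\<close> exceeds its old one and lies between \<open>d q\<close> and \<open>d q + 1\<close> for every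
  neighbour \<open>q\<close>. So the d-values only grow, every edge at a moving node stays smooth, and
  a non-smooth edge has two endpoints that do not move, which keeps it non-smooth with the
  same rank.\<close>

lemma Dist_le_neighbour:
  assumes "q \<in> set (Nb p)"
  shows "Dist Nb \<gamma> p \<le> dd \<gamma> q + 1"
  unfolding Dist_def by (rule Min_le) (use assms in auto)

lemma Dist_attained:
  assumes "Nb p \<noteq> []"
  obtains q where "q \<in> set (Nb p)" "Dist Nb \<gamma> p = dd \<gamma> q + 1"
proof -
  have "Dist Nb \<gamma> p \<in> {dd \<gamma> q + 1 | q. q \<in> set (Nb p)}"
    unfolding Dist_def by (rule Min_in) (use assms in \<open>auto simp: neq_Nil_conv\<close>)
  then show ?thesis using that by blast
qed

lemma rooted_graph_Edges_sym:
  assumes "rooted_graph V Nb r" and "(p, q) \<in> Edges V Nb"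
  shows "(q, p) \<in> Edges V Nb"
  using assms unfolding rooted_graph_def Edges_def by auto

lemma rooted_graph_neighbours_nonempty:
  assumes "rooted_graph V Nb r" and "p \<in> V" and "p \<noteq> r"
  shows "Nb p \<noteq> []"
proof -
  have "(r, p) \<in> (Edges V Nb)\<^sup>*" using assms unfolding rooted_graph_def by blast
  with \<open>p \<noteq> r\<close> obtain y where "(y, p) \<in> Edges V Nb" by (metis rtranclE)
  then have "(p, y) \<in> Edges V Nb" by (rule rooted_graph_Edges_sym[OF assms(1)])
  then show ?thesis unfolding Edges_def by auto
qed

lemma d_step_moved_node:
  assumes "d_step V Nb r \<gamma> \<gamma>'" and "dd \<gamma>' p \<noteq> dd \<gamma> p"
  shows "p \<in> V" and "p \<noteq> r" and "dd \<gamma>' p = Dist Nb \<gamma> p"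
proof -
  obtain S where S: "S \<subseteq> V" "\<forall>p. dd \<gamma>' p = (if p \<in> S then exec_d Nb r \<gamma> p else dd \<gamma> p)"
    and root: "dd \<gamma> r = dd \<gamma>' r"
    using assms(1) unfolding d_step_def step_def by blast
  have "p \<in> S" using S(2) assms(2) by metis
  then show "p \<in> V" using S(1) by blast
  show "p \<noteq> r" using assms(2) root by auto
  with \<open>p \<in> S\<close> S(2) assms(2) show "dd \<gamma>' p = Dist Nb \<gamma> p"
    unfolding exec_d_def by (auto split: if_splits)
qed

lemma smooth_d_step_moved_node:
  assumes G: "rooted_graph V Nb r" and step: "smooth_d_step V Nb r \<gamma> \<gamma>'"
    and moved: "dd \<gamma>' p \<noteq> dd \<gamma> p"
  shows "p \<in> V" and "dd \<gamma> p < dd \<gamma>' p"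
    and "q \<in> set (Nb p) \<Longrightarrow> dd \<gamma> q \<le> dd \<gamma>' p \<and> dd \<gamma>' p \<le> dd \<gamma> q + 1"
proof -
  have ds: "d_step V Nb r \<gamma> \<gamma>'" using step unfolding smooth_d_step_def by blast
  show pV: "p \<in> V" by (rule d_step_moved_node(1)[OF ds moved])
  have new: "dd \<gamma>' p = Dist Nb \<gamma> p" by (rule d_step_moved_node(3)[OF ds moved])
  have "\<forall>q\<in>set (Nb p). smooth_edge \<gamma> (p, q)"
    using conjunct2[OF step[unfolded smooth_d_step_def]] pV moved by blast
  then have close: "dd \<gamma> q \<le> dd \<gamma> p + 1 \<and> dd \<gamma> p \<le> dd \<gamma> q + 1" if "q \<in> set (Nb p)" for q
    using that unfolding smooth_edge_def by auto
  obtain q0 where "q0 \<in> set (Nb p)" "Dist Nb \<gamma> p = dd \<gamma> q0 + 1"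
    using rooted_graph_neighbours_nonempty[OF G pV d_step_moved_node(2)[OF ds moved]]
    by (rule Dist_attained)
  then have "dd \<gamma> p \<le> dd \<gamma>' p" using close new by simp
  then show less: "dd \<gamma> p < dd \<gamma>' p" using moved by simp
  show "dd \<gamma> q \<le> dd \<gamma>' p \<and> dd \<gamma>' p \<le> dd \<gamma> q + 1" if "q \<in> set (Nb p)"
    using close[OF that] less new Dist_le_neighbour[where Nb = Nb, OF that] by simp
qed

lemma smooth_edge_swap: "smooth_edge \<gamma> (q, p) \<longleftrightarrow> smooth_edge \<gamma> (p, q)"
  unfolding smooth_edge_def by (simp add: abs_minus_commute)

lemma smooth_d_step_non_smooth_edge_fixed:
  assumes G: "rooted_graph V Nb r" and step: "smooth_d_step V Nb r \<gamma> \<gamma>'"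
    and e: "(p, q) \<in> Edges V Nb" and non_smooth: "\<not> smooth_edge \<gamma> (p, q)"
  shows "dd \<gamma>' p = dd \<gamma> p" and "dd \<gamma>' q = dd \<gamma> q"
proof -
  have "(q, p) \<in> Edges V Nb" by (rule rooted_graph_Edges_sym[OF G e])
  then show "dd \<gamma>' p = dd \<gamma> p" and "dd \<gamma>' q = dd \<gamma> q"
    using step e non_smooth smooth_edge_swap[of \<gamma> q p]
    unfolding smooth_d_step_def Edges_def by blast+
qed

lemma smooth_d_step_smooth_edge:
  assumes G: "rooted_graph V Nb r" and step: "smooth_d_step V Nb r \<gamma> \<gamma>'"
    and e: "(p, q) \<in> Edges V Nb" and smooth: "smooth_edge \<gamma> (p, q)"
  shows "smooth_edge \<gamma>' (p, q)"
proof -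
  have pq: "q \<in> set (Nb p)" and qp: "p \<in> set (Nb q)"
    using e rooted_graph_Edges_sym[OF G e] unfolding Edges_def by auto
  note less = smooth_d_step_moved_node(2)[OF G step]
    and between = smooth_d_step_moved_node(3)[OF G step]
  consider "dd \<gamma>' p = dd \<gamma> p" "dd \<gamma>' q = dd \<gamma> q" | "dd \<gamma>' p = dd \<gamma> p" "dd \<gamma>' q \<noteq> dd \<gamma> q"
    | "dd \<gamma>' p \<noteq> dd \<gamma> p" "dd \<gamma>' q = dd \<gamma> q" | "dd \<gamma>' p \<noteq> dd \<gamma> p" "dd \<gamma>' q \<noteq> dd \<gamma> q"
    by blast
  then show ?thesis
  proof cases
    case 1
    then show ?thesis using smooth unfolding smooth_edge_def by simp
  next
    case 2
    then show ?thesis using between[OF 2(2) qp] unfolding smooth_edge_def by simp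
  next
    case 3
    then show ?thesis using between[OF 3(1) pq] unfolding smooth_edge_def by simp
  next
    case 4
    then show ?thesis
      using less[OF 4(1)] less[OF 4(2)] between[OF 4(1) pq] between[OF 4(2) qp]
      unfolding smooth_edge_def by simp
  qed
qed

lemma smooth_d_step_smooth_edge_iff:
  assumes G: "rooted_graph V Nb r" and step: "smooth_d_step V Nb r \<gamma> \<gamma>'"
    and e: "(p, q) \<in> Edges V Nb"
  shows "smooth_edge \<gamma>' (p, q) \<longleftrightarrow> smooth_edge \<gamma> (p, q)"
  using smooth_d_step_smooth_edge[OF G step e] smooth_d_step_non_smooth_edge_fixed[OF G step e]
  by (metis smooth_edge_def case_prod_conv)

lemma smooth_d_step_sum_d_less:
  assumes G: "rooted_graph V Nb r" and step: "smooth_d_step V Nb r \<gamma> \<gamma>'"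
  shows "sum_d V \<gamma> < sum_d V \<gamma>'"
proof -
  have mono: "dd \<gamma> p \<le> dd \<gamma>' p" for p
    using smooth_d_step_moved_node(2)[OF G step, of p] by fastforce
  obtain p0 where "p0 \<in> V" "dd \<gamma> p0 \<noteq> dd \<gamma>' p0"
    using step unfolding smooth_d_step_def d_step_def by blast
  then have "dd \<gamma> p0 < dd \<gamma>' p0" using mono[of p0] by simp
  moreover have "finite V" using G unfolding rooted_graph_def by blast
  ultimately show ?thesis
    unfolding sum_d_def using mono \<open>p0 \<in> V\<close> by (intro sum_strict_mono_ex1) auto
qed

theorem lemma5:
  fixes V :: "'v set" and Nb :: "'v \<Rightarrow> 'v list" and r :: 'v
    and \<gamma> \<gamma>' :: "'v conf"
  assumes "rooted_graph V Nb r"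
    and "valid_conf V Nb \<gamma>"
    and "smooth_d_step V Nb r \<gamma> \<gamma>'"
  shows "(\<forall>e\<in>Edges V Nb. \<not> smooth_edge \<gamma> e \<longleftrightarrow> \<not> smooth_edge \<gamma>' e)
       \<and> (\<forall>e\<in>Edges V Nb. \<not> smooth_edge \<gamma> e \<longrightarrow> rank \<gamma> e = rank \<gamma>' e)
       \<and> sum_d V \<gamma>' > sum_d V \<gamma>"
proof -
  have "\<not> smooth_edge \<gamma> e \<longleftrightarrow> \<not> smooth_edge \<gamma>' e" if "e \<in> Edges V Nb" for e
    using that smooth_d_step_smooth_edge_iff[OF assms(1,3)] by (cases e) auto
  moreover have "rank \<gamma> e = rank \<gamma>' e" if "e \<in> Edges V Nb" "\<not> smooth_edge \<gamma> e" for e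
    using that smooth_d_step_non_smooth_edge_fixed[OF assms(1,3)]
    unfolding rank_def by (cases e) auto
  moreover have "sum_d V \<gamma>' > sum_d V \<gamma>"
    by (rule smooth_d_step_sum_d_less[OF assms(1,3)])
  ultimately show ?thesis by blast
qed

end
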